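(* Let $M=(X,rk)$ be a matroid on a finite ground set $X$ with rank $r=rk(X)$. Then for every integer $i$ with $i>r-d_2(M)$, \[[x^i]T_M(x,1)=\binom{|X|-i-1}{r-i}-\sum_{\substack{C\in \mathcal{C}(M),\\ |C|<d_2(M)}} \binom{|X|-|C|-i-1}{|X|-r-1}.\]
   Context: $T_M(x,y)=\sum_{A\subseteq X}(x-1)^{r-rk(A)}(y-1)^{|A|-rk(A)}$ is the Tutte polynomial of $M$, and $[x^i]f(x)$ denotes the coefficient of $x^i$. A circuit of $M$ is a set $C\subseteq X$ with $rk(C\setminus\{e\})=|C|-1=rk(C)$ for all $e\in C$; $\mathcal{C}(M)$ is the set of all circuits. Let $\mathcal{D}(M)=\{A\subseteq X: rk(A\setminus\{e\})=rk(A)\text{ for every } e\in A\}$ and, for $k\ge1$, $d_k(M)=\min\{|A|: A\in\mathcal{D}(M),\ rk(A)=|A|-k\}$. *)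

theory Defs
  imports "HOL-Computational_Algebra.Polynomial"
begin

definition matroid :: "'a set \<Rightarrow> ('a set \<Rightarrow> nat) \<Rightarrow> bool" where
  "matroid X rk \<longleftrightarrow> finite X
     \<and> (\<forall>A. A \<subseteq> X \<longrightarrow> rk A \<le> card A)
     \<and> (\<forall>A B. A \<subseteq> B \<and> B \<subseteq> X \<longrightarrow> rk A \<le> rk B)
     \<and> (\<forall>A B. A \<subseteq> X \<and> B \<subseteq> X \<longrightarrow> rk (A \<union> B) + rk (A \<inter> B) \<le> rk A + rk B)"

text \<open>Tutte polynomial as a polynomial in x whose coefficients are polynomials in y.\<close>
definition tutte :: "'a set \<Rightarrow> ('a set \<Rightarrow> nat) \<Rightarrow> int poly poly" where
  "tutte X rk = (\<Sum>A\<in>Pow X.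
      [:[:-1:], 1:] ^ (rk X - rk A) * [: [:-1, 1:] ^ (card A - rk A) :])"

definition tutte_x1 :: "'a set \<Rightarrow> ('a set \<Rightarrow> nat) \<Rightarrow> int poly" where
  "tutte_x1 X rk = map_poly (\<lambda>q. poly q 1) (tutte X rk)"

definition circuits :: "'a set \<Rightarrow> ('a set \<Rightarrow> nat) \<Rightarrow> 'a set set" where
  "circuits X rk = {C. C \<subseteq> X \<and> C \<noteq> {} \<and> rk C = card C - 1
      \<and> (\<forall>e\<in>C. rk (C - {e}) = card C - 1)}"

definition Dsets :: "'a set \<Rightarrow> ('a set \<Rightarrow> nat) \<Rightarrow> 'a set set" where
  "Dsets X rk = {A. A \<subseteq> X \<and> (\<forall>e\<in>A. rk (A - {e}) = rk A)}"

definition dk :: "'a set \<Rightarrow> ('a set \<Rightarrow> nat) \<Rightarrow> nat \<Rightarrow> nat" where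
  "dk X rk k = Min {card A | A. A \<in> Dsets X rk \<and> rk A + k = card A}"

definition binom :: "int \<Rightarrow> int \<Rightarrow> int" where
  "binom n k = (if 0 \<le> k \<and> k \<le> n then int (nat n choose nat k) else 0)"

end

(* Only independent sets A contribute to T_M(x,1), each with (x-1)^(r-|A|), and the x^i
   coefficient of that term vanishes unless |A| <= r - i < d_2. A set with fewer than d_2
   elements has nullity at most 1, since a minimal subset of nullity >= 2 lies in D(M) with
   nullity exactly 2. So it contains at most one circuit, and its independence indicator is
   1 minus the number of circuits inside it. Summing over all subsets of X, and over the
   supersets of each small circuit C, leaves truncated binomial sums
   sum_{k<=R} C(N,k) (x-1)^(R-k), whose x^t coefficient is C(N-1-t, R-t) for R < N. *)

theory Submission
  imports Defs
begin

lemma binom_of_nat [simp]: "binom (int n) (int k) = int (n choose k)"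
  by (simp add: binom_def binomial_eq_0)

lemma binom_symmetric: "binom n k = binom n (n - k)"
proof (cases "0 \<le> k \<and> k \<le> n")
  case True
  then obtain a b where "n = int a" "k = int b" "b \<le> a"
    by (metis nonneg_int_cases of_nat_le_iff order.trans)
  then show ?thesis
    using binomial_symmetric[of b a] by (simp flip: of_nat_diff)
next
  case False
  then show ?thesis
    unfolding binom_def by auto
qed

(* The exception is binom 0 0 = 1, whereas binom (-1) _ = 0. *)
lemma binom_pascal:
  assumes "n \<noteq> -1 \<or> k \<noteq> -1"
  shows "binom (n + 1) (k + 1) = binom n k + binom n (k + 1)"
proof (cases "0 \<le> n \<and> 0 \<le> k")
  case True
  then obtain m j where "n = int m" "k = int j"
    by (metis nonneg_int_cases)
  then show ?thesis
    unfolding binom_def by (auto simp: nat_add_distrib binomial_eq_0)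
next
  case False
  then show ?thesis
    using assms unfolding binom_def by auto
qed

lemma coeff_linear_power:
  fixes a :: "'a::comm_semiring_1"
  shows "coeff ([:a, 1:] ^ k) i = of_nat (k choose i) * a ^ (k - i)"
proof (cases "i \<le> k")
  case True
  then show ?thesis using coeff_linear_poly_power[OF True, of a 1] by simp
next
  case False
  have "degree ([:a, 1:] ^ k) \<le> k"
    by (rule order.trans[OF degree_power_le]) simp
  then show ?thesis using False by (simp add: coeff_eq_0 binomial_eq_0)
qed

lemma sum_choose_pow_xm1_Suc:
  "(\<Sum>k\<le>Suc R. smult (of_nat (N choose k)) ([:-1, 1:] ^ (Suc R - k)))
     = [:-1, 1:] * (\<Sum>k\<le>R. smult (of_nat (N choose k)) ([:-1, 1:] ^ (R - k)))
       + [:of_nat (N choose Suc R):]"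
  by (simp add: sum_distrib_left Suc_diff_le)

lemma coeff_sum_choose_pow_xm1:
  assumes "R < N"
  shows "coeff (\<Sum>k\<le>R. smult (int (N choose k)) ([:-1, 1:] ^ (R - k))) t
    = binom (int N - int t - 1) (int R - int t)"
  using assms
proof (induction R arbitrary: t)
  case 0
  then show ?case by (cases t) (auto simp: binom_def)
next
  case (Suc R)
  let ?S = "\<lambda>R. \<Sum>k\<le>R. smult (int (N choose k)) ([:-1, 1:] ^ (R - k))"
  have IH: "coeff (?S R) t = binom (int N - int t - 1) (int R - int t)" for t
    using Suc by simp
  show ?case
  proof (cases t)
    case 0
    have "coeff (?S (Suc R)) 0 = int (N choose Suc R) - binom (int N - 1) (int R)"
      using IH[of 0] unfolding sum_choose_pow_xm1_Suc by simp
    also have "\<dots> = binom (int N - 1) (int R + 1)"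
      using binom_pascal[of "int N - 1" "int R"] binom_of_nat[of N "Suc R"] by (simp add: add.commute)
    finally show ?thesis using 0 by (simp add: add.commute)
  next
    case (Suc t')
    have "coeff (?S (Suc R)) t
        = binom (int N - int t' - 1) (int R - int t') - binom (int N - int t' - 2) (int R - int t' - 1)"
      using IH[of t'] IH[of t] Suc unfolding sum_choose_pow_xm1_Suc by (simp add: algebra_simps)
    also have "\<dots> = binom (int N - int t' - 2) (int R - int t')"
      using binom_pascal[of "int N - int t' - 2" "int R - int t' - 1"] \<open>Suc R < N\<close> by simp
    finally show ?thesis using Suc by (simp add: algebra_simps)
  qed
qed

(* Integer exponents, read as 0 when negative, make the terms with |A| > r below vanish. *)
definition coeff_pow_xm1 :: "int \<Rightarrow> nat \<Rightarrow> int" where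
  "coeff_pow_xm1 e t = (if 0 \<le> e then coeff ([:-1, 1:] ^ nat e) t else 0)"

lemma coeff_pow_xm1_of_nat: "coeff_pow_xm1 (int n) t = coeff ([:-1, 1:] ^ n) t"
  by (simp add: coeff_pow_xm1_def)

lemma coeff_pow_xm1_eq_0:
  assumes "e < int t"
  shows "coeff_pow_xm1 e t = 0"
proof -
  have "degree ([:-1, 1::int:] ^ nat e) < t" if "0 \<le> e"
    using assms that by (simp add: degree_power_eq)
  then show ?thesis
    unfolding coeff_pow_xm1_def by (simp add: coeff_eq_0)
qed

lemma sum_Pow_card:
  fixes h :: "nat \<Rightarrow> 'b::comm_semiring_1"
  assumes "finite Y"
  shows "(\<Sum>B\<in>Pow Y. h (card B)) = (\<Sum>k\<le>card Y. of_nat (card Y choose k) * h k)"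
proof -
  have "(\<Sum>B\<in>Pow Y. h (card B)) = (\<Sum>k\<le>card Y. \<Sum>B\<in>{B\<in>Pow Y. card B = k}. h (card B))"
    by (rule sum.group[symmetric]) (use assms in \<open>auto intro: card_mono\<close>)
  also have "\<dots> = (\<Sum>k\<le>card Y. of_nat (card Y choose k) * h k)"
    using n_subsets[OF assms] by (simp add: Pow_def)
  finally show ?thesis .
qed

lemma sum_Pow_coeff_pow_xm1:
  assumes "finite Y" and "R < int (card Y)"
  shows "(\<Sum>B\<in>Pow Y. coeff_pow_xm1 (R - int (card B)) t)
    = binom (int (card Y) - int t - 1) (R - int t)"
proof (cases "0 \<le> R")
  case True
  then obtain R' where R': "R = int R'"
    by (metis nonneg_int_cases)
  have "(\<Sum>B\<in>Pow Y. coeff_pow_xm1 (R - int (card B)) t)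
      = (\<Sum>k\<le>card Y. int (card Y choose k) * coeff_pow_xm1 (int R' - int k) t)"
    using sum_Pow_card[OF assms(1)] R' by simp
  also have "\<dots> = (\<Sum>k\<le>R'. int (card Y choose k) * coeff ([:-1, 1:] ^ (R' - k)) t)"
    using assms(2) R'
    by (intro sum.mono_neutral_cong_right) (auto simp: coeff_pow_xm1_def nat_diff_distrib)
  also have "\<dots> = coeff (\<Sum>k\<le>R'. smult (int (card Y choose k)) ([:-1, 1:] ^ (R' - k))) t"
    by (simp add: coeff_sum)
  also have "\<dots> = binom (int (card Y) - int t - 1) (R - int t)"
    using coeff_sum_choose_pow_xm1 assms(2) R' by simp
  finally show ?thesis .
next
  case False
  then show ?thesis
    by (simp add: coeff_pow_xm1_def binom_def)
qed

lemma sum_supersets_eq_sum_Pow_Diff: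
  assumes "C \<subseteq> X"
  shows "(\<Sum>A\<in>{A\<in>Pow X. C \<subseteq> A}. g A) = (\<Sum>B\<in>Pow (X - C). g (B \<union> C))"
proof -
  have "{A\<in>Pow X. C \<subseteq> A} = (\<lambda>B. B \<union> C) ` Pow (X - C)"
    using assms by (auto intro!: image_eqI[where x = "_ - C"])
  moreover have "inj_on (\<lambda>B. B \<union> C) (Pow (X - C))"
    by (rule inj_onI) blast
  ultimately show ?thesis by (simp add: sum.reindex)
qed

lemma sum_supersets_coeff_pow_xm1:
  assumes "finite X" and "C \<subseteq> X" and "R < int (card X)"
  shows "(\<Sum>A\<in>{A\<in>Pow X. C \<subseteq> A}. coeff_pow_xm1 (R - int (card A)) t)
    = binom (int (card X) - int (card C) - int t - 1) (int (card X) - R - 1)"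
proof -
  have card_X_C: "card (X - C) = card X - card C" and "card C \<le> card X"
    using assms by (auto simp: card_Diff_subset finite_subset card_mono)
  have "card (B \<union> C) = card B + card C" if "B \<in> Pow (X - C)" for B
    using that assms by (intro card_Un_disjoint) (auto intro: finite_subset)
  then have "(\<Sum>A\<in>{A\<in>Pow X. C \<subseteq> A}. coeff_pow_xm1 (R - int (card A)) t)
      = (\<Sum>B\<in>Pow (X - C). coeff_pow_xm1 ((R - int (card C)) - int (card B)) t)"
    unfolding sum_supersets_eq_sum_Pow_Diff[OF assms(2)] by (intro sum.cong) (simp_all add: algebra_simps)
  also have "\<dots> = binom (int (card X) - int (card C) - int t - 1) (R - int (card C) - int t)"
    using sum_Pow_coeff_pow_xm1[of "X - C" "R - int (card C)" t] assms card_X_C \<open>card C \<le> card X\<close>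
    by simp
  also have "\<dots> = binom (int (card X) - int (card C) - int t - 1) (int (card X) - R - 1)"
    using binom_symmetric[of "int (card X) - int (card C) - int t - 1" "R - int (card C) - int t"]
    by (simp add: algebra_simps)
  finally show ?thesis .
qed

locale rank_matroid =
  fixes X :: "'a set" and rk :: "'a set \<Rightarrow> nat"
  assumes matroid: "matroid X rk"
begin

lemma finite_ground: "finite X"
  using matroid unfolding matroid_def by blast

lemma rank_le_card: "A \<subseteq> X \<Longrightarrow> rk A \<le> card A"
  using matroid unfolding matroid_def by blast

lemma rank_mono: "A \<subseteq> B \<Longrightarrow> B \<subseteq> X \<Longrightarrow> rk A \<le> rk B"
  using matroid unfolding matroid_def by blast

lemma rank_submodular: "A \<subseteq> X \<Longrightarrow> B \<subseteq> X \<Longrightarrow> rk (A \<union> B) + rk (A \<inter> B) \<le> rk A + rk B"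
  using matroid unfolding matroid_def by blast

lemma finite_subset_ground: "A \<subseteq> X \<Longrightarrow> finite A"
  using finite_ground finite_subset by blast

lemma nullity_mono:
  assumes "A \<subseteq> B" and "B \<subseteq> X"
  shows "card A - rk A \<le> card B - rk B"
proof -
  have "A \<union> (B - A) = B"
    using assms by blast
  then have "rk B \<le> rk A + rk (B - A)"
    using rank_submodular[of A "B - A"] assms by fastforce
  moreover have "rk (B - A) \<le> card (B - A)"
    using assms by (intro rank_le_card) blast
  moreover have "card (B - A) = card B - card A" and "card A \<le> card B"
    using assms by (auto simp: card_Diff_subset finite_subset_ground card_mono)
  moreover have "rk A \<le> card A"
    using assms by (intro rank_le_card) blast
  ultimately show ?thesis by linarith
qed

lemma indep_subset:
  assumes "I \<subseteq> X" and "rk I = card I" and "A \<subseteq> I"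
  shows "rk A = card A"
  using nullity_mono[of A I] rank_le_card[of A] assms by force

lemma rank_lt_card_if_dependent:
  assumes "A \<subseteq> X" and "rk A < card A"
  shows "rk X < card X"
  using nullity_mono[OF assms(1) order_refl] rank_le_card[OF order_refl] assms(2) by linarith

lemma dk_le_card:
  assumes "D \<in> Dsets X rk" and "rk D + k = card D"
  shows "dk X rk k \<le> card D"
proof -
  have "{card A | A. A \<in> Dsets X rk \<and> rk A + k = card A} \<subseteq> card ` Pow X"
    unfolding Dsets_def by auto
  then have "finite {card A | A. A \<in> Dsets X rk \<and> rk A + k = card A}"
    using finite_ground finite_subset by blast
  then show ?thesis
    unfolding dk_def by (rule Min_le) (use assms in blast)
qed

text \<open>A minimal subset of nullity at least \<open>k\<close> has nullity exactly \<open>k\<close>, and deleting any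
  element lowers its nullity, not its rank.\<close>
lemma Dset_subset_if_nullity_ge:
  assumes "A \<subseteq> X" and "0 < k" and "rk A + k \<le> card A"
  obtains D where "D \<subseteq> A" "D \<in> Dsets X rk" "rk D + k = card D"
proof -
  have "\<exists>D. (D \<subseteq> A \<and> rk D + k \<le> card D)
      \<and> (\<forall>D'. D' \<subseteq> A \<and> rk D' + k \<le> card D' \<longrightarrow> card D \<le> card D')"
    using ex_has_least_nat[of "\<lambda>D. D \<subseteq> A \<and> rk D + k \<le> card D" A card] assms(3) by blast
  then obtain D where D: "D \<subseteq> A" "rk D + k \<le> card D"
    and min: "\<And>D'. D' \<subseteq> A \<Longrightarrow> rk D' + k \<le> card D' \<Longrightarrow> card D \<le> card D'"
    by blast
  have DX: "D \<subseteq> X" using D assms by blast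
  have delete: "rk (D - {e}) = rk D \<and> rk D + k = card D" if "e \<in> D" for e
  proof -
    have "card (D - {e}) = card D - 1" and "0 < card D"
      using that finite_subset_ground[OF DX] card_gt_0_iff by auto
    moreover have "\<not> rk (D - {e}) + k \<le> card (D - {e})"
    proof
      assume "rk (D - {e}) + k \<le> card (D - {e})"
      then have "card D \<le> card (D - {e})"
        using min D(1) by blast
      then show False
        using calculation by linarith
    qed
    moreover have "rk (D - {e}) \<le> rk D"
      using DX by (intro rank_mono) auto
    ultimately show ?thesis using D by linarith
  qed
  have "D \<noteq> {}"
    using D(2) assms(2) by auto
  then obtain e where "e \<in> D"
    by blast
  then have "rk D + k = card D" using delete by blast
  moreover have "D \<in> Dsets X rk"
    using delete DX unfolding Dsets_def by blast
  ultimately show ?thesis using that D by blast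
qed

lemma nullity_lt_if_card_lt_dk:
  assumes "A \<subseteq> X" and "0 < k" and "card A < dk X rk k"
  shows "card A < rk A + k"
proof (rule ccontr)
  assume "\<not> card A < rk A + k"
  then have "rk A + k \<le> card A"
    by simp
  then obtain D where D: "D \<subseteq> A" "D \<in> Dsets X rk" "rk D + k = card D"
    using Dset_subset_if_nullity_ge[OF assms(1,2)] by blast
  have "dk X rk k \<le> card D"
    using dk_le_card[OF D(2,3)] .
  also have "\<dots> \<le> card A"
    using card_mono[OF finite_subset_ground[OF assms(1)] D(1)] .
  finally show False
    using assms(3) by simp
qed

lemma circuit_rank:
  assumes "C \<in> circuits X rk"
  shows "rk C + 1 = card C"
proof -
  have "C \<noteq> {}" and "C \<subseteq> X" and "rk C = card C - 1"
    using assms unfolding circuits_def by auto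
  moreover have "0 < card C"
    using calculation finite_subset_ground card_gt_0_iff by blast
  ultimately show ?thesis
    by linarith
qed

lemma circuit_psubset_indep:
  assumes "C \<in> circuits X rk" and "B \<subset> C"
  shows "rk B = card B"
proof -
  obtain e where e: "e \<in> C" "B \<subseteq> C - {e}"
    using assms by blast
  have "rk (C - {e}) = card (C - {e})" and "C - {e} \<subseteq> X"
    using assms e finite_subset_ground unfolding circuits_def by auto
  then show ?thesis using indep_subset e by blast
qed

lemma dependent_contains_circuit:
  assumes "A \<subseteq> X" and "rk A < card A"
  obtains C where "C \<in> circuits X rk" "C \<subseteq> A"
proof -
  obtain D where D: "D \<subseteq> A" "D \<in> Dsets X rk" "rk D + 1 = card D"
    using Dset_subset_if_nullity_ge[of A 1] assms by auto
  have "D \<in> circuits X rk"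
    using D finite_subset_ground unfolding Dsets_def circuits_def by auto
  then show ?thesis using that D by blast
qed

lemma circuit_not_subset_indep:
  assumes "A \<subseteq> X" and "rk A = card A" and "C \<in> circuits X rk"
  shows "\<not> C \<subseteq> A"
proof
  assume "C \<subseteq> A"
  then have "rk C = card C"
    using indep_subset assms by blast
  then show False
    using circuit_rank[OF assms(3)] by simp
qed

lemma nullity_Un_circuits_ge_2:
  assumes C1: "C1 \<in> circuits X rk" and C2: "C2 \<in> circuits X rk" and "C1 \<noteq> C2"
  shows "rk (C1 \<union> C2) + 2 \<le> card (C1 \<union> C2)"
proof -
  have X: "C1 \<subseteq> X" "C2 \<subseteq> X"
    using C1 C2 unfolding circuits_def by auto
  have "\<not> C1 \<subseteq> C2"
  proof
    assume "C1 \<subseteq> C2"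
    then have "rk C1 = card C1"
      using circuit_psubset_indep[OF C2] \<open>C1 \<noteq> C2\<close> by blast
    then show False
      using circuit_rank[OF C1] by simp
  qed
  then have "rk (C1 \<inter> C2) = card (C1 \<inter> C2)"
    using circuit_psubset_indep[OF C1] by blast
  moreover have "card (C1 \<union> C2) + card (C1 \<inter> C2) = card C1 + card C2"
    using card_Un_Int[OF finite_subset_ground[OF X(1)] finite_subset_ground[OF X(2)]] by simp
  ultimately show ?thesis
    using rank_submodular[OF X] circuit_rank[OF C1] circuit_rank[OF C2] by linarith
qed

lemma circuit_unique_if_card_lt_dk2:
  assumes "A \<subseteq> X" and "card A < dk X rk 2"
    and "C1 \<in> circuits X rk" "C1 \<subseteq> A" and "C2 \<in> circuits X rk" "C2 \<subseteq> A"
  shows "C1 = C2"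
proof (rule ccontr)
  assume "C1 \<noteq> C2"
  then have "rk (C1 \<union> C2) + 2 \<le> card (C1 \<union> C2)"
    using nullity_Un_circuits_ge_2 assms by blast
  moreover have "C1 \<union> C2 \<subseteq> A"
    using assms by blast
  then have "card (C1 \<union> C2) < dk X rk 2"
    using card_mono[OF finite_subset_ground[OF assms(1)]] assms(2) by (meson le_less_trans)
  moreover have "C1 \<union> C2 \<subseteq> X"
    using assms by blast
  ultimately show False
    using nullity_lt_if_card_lt_dk[of "C1 \<union> C2" 2] by linarith
qed

lemma tutte_x1_eq_sum_indep:
  "tutte_x1 X rk = (\<Sum>A\<in>{A\<in>Pow X. rk A = card A}. [:-1, 1:] ^ (rk X - card A))"
  (is "_ = ?T")
proof (rule poly_eqI)
  fix i
  have "coeff (tutte_x1 X rk) i = poly (coeff (tutte X rk) i) 1"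
    unfolding tutte_x1_def by (simp add: coeff_map_poly)
  also have "\<dots> = (\<Sum>A\<in>Pow X.
      int ((rk X - rk A) choose i) * (-1) ^ (rk X - rk A - i) * 0 ^ (card A - rk A))"
    unfolding tutte_def coeff_sum poly_sum
    by (simp add: coeff_linear_power poly_power of_nat_poly mult_ac)
  also have "\<dots> = (\<Sum>A\<in>Pow X. if rk A = card A then coeff ([:-1, 1:] ^ (rk X - card A)) i else 0)"
  proof (intro sum.cong refl)
    fix A assume "A \<in> Pow X"
    then have "rk A \<le> card A"
      using rank_le_card by blast
    then show "int ((rk X - rk A) choose i) * (-1) ^ (rk X - rk A - i) * 0 ^ (card A - rk A)
        = (if rk A = card A then coeff ([:-1, 1:] ^ (rk X - card A)) i else 0)"
      by (simp add: coeff_linear_power)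
  qed
  also have "\<dots> = coeff ?T i"
    unfolding coeff_sum by (rule sum.inter_filter[symmetric]) (simp add: finite_ground)
  finally show "coeff (tutte_x1 X rk) i = coeff ?T i" .
qed

lemma coeff_tutte_x1:
  "coeff (tutte_x1 X rk) i
    = (\<Sum>A\<in>{A\<in>Pow X. rk A = card A}. coeff_pow_xm1 (int (rk X) - int (card A)) i)"
  unfolding tutte_x1_eq_sum_indep coeff_sum
proof (intro sum.cong refl)
  fix A assume "A \<in> {A\<in>Pow X. rk A = card A}"
  then have "card A \<le> rk X"
    using rank_mono[of A X] by auto
  then show "coeff ([:-1, 1:] ^ (rk X - card A)) i = coeff_pow_xm1 (int (rk X) - int (card A)) i"
    by (simp add: coeff_pow_xm1_of_nat flip: of_nat_diff)
qed

lemma sum_indep_eq_sum_minus_sum_circuits: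
  fixes f :: "'a set \<Rightarrow> 'b::ab_group_add"
  assumes small: "\<And>A. A \<subseteq> X \<Longrightarrow> f A \<noteq> 0 \<Longrightarrow> card A < dk X rk 2"
  shows "(\<Sum>A\<in>{A\<in>Pow X. rk A = card A}. f A)
    = (\<Sum>A\<in>Pow X. f A)
      - (\<Sum>C\<in>{C\<in>circuits X rk. card C < dk X rk 2}. \<Sum>A\<in>{A\<in>Pow X. C \<subseteq> A}. f A)"
proof -
  let ?Circ = "{C\<in>circuits X rk. card C < dk X rk 2}"
  have indicator: "(if rk A = card A then f A else 0) = f A - (\<Sum>C\<in>{C\<in>?Circ. C \<subseteq> A}. f A)"
    if A: "A \<subseteq> X" for A
  proof (cases "f A = 0")
    case False
    then have A_small: "card A < dk X rk 2"
      using small A by blast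
    show ?thesis
    proof (cases "rk A = card A")
      case True
      have "{C\<in>?Circ. C \<subseteq> A} = {}"
        using circuit_not_subset_indep A True by blast
      then have "(\<Sum>C\<in>{C\<in>?Circ. C \<subseteq> A}. f A) = 0"
        by (simp only: sum.empty)
      then show ?thesis
        using True by simp
    next
      case False
      then have "rk A < card A"
        using rank_le_card[OF A] by simp
      then obtain C where C: "C \<in> circuits X rk" "C \<subseteq> A"
        using dependent_contains_circuit A by blast
      have "card C < dk X rk 2"
        using card_mono[OF finite_subset_ground[OF A] C(2)] A_small by simp
      then have "{C'\<in>?Circ. C' \<subseteq> A} = {C}"
        using circuit_unique_if_card_lt_dk2[OF A A_small C] C by blast
      then show ?thesis
        using False by simp
    qed
  qed simp
  have "finite ?Circ"
    using finite_ground unfolding circuits_def by (auto intro: finite_subset[of _ "Pow X"])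
  have "(\<Sum>A\<in>{A\<in>Pow X. rk A = card A}. f A) = (\<Sum>A\<in>Pow X. if rk A = card A then f A else 0)"
    by (rule sum.inter_filter) (simp add: finite_ground)
  also have "\<dots> = (\<Sum>A\<in>Pow X. f A - (\<Sum>C\<in>{C\<in>?Circ. C \<subseteq> A}. f A))"
    using indicator by (intro sum.cong) auto
  also have "\<dots> = (\<Sum>A\<in>Pow X. f A) - (\<Sum>A\<in>Pow X. \<Sum>C\<in>{C\<in>?Circ. C \<subseteq> A}. f A)"
    by (rule sum_subtractf)
  also have "(\<Sum>A\<in>Pow X. \<Sum>C\<in>{C\<in>?Circ. C \<subseteq> A}. f A) = (\<Sum>C\<in>?Circ. \<Sum>A\<in>{A\<in>Pow X. C \<subseteq> A}. f A)"
    by (rule sum.swap_restrict) (simp_all add: finite_ground \<open>finite ?Circ\<close>)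
  finally show ?thesis .
qed

end

theorem theorem3p4:
  fixes X :: "'a set" and rk :: "'a set \<Rightarrow> nat" and i :: nat
  assumes "matroid X rk"
    and "\<exists>A\<in>Dsets X rk. rk A + 2 = card A"
    and "int i > int (rk X) - int (dk X rk 2)"
  shows "coeff (tutte_x1 X rk) i =
    binom (int (card X) - int i - 1) (int (rk X) - int i)
    - (\<Sum>C\<in>{C\<in>circuits X rk. card C < dk X rk 2}.
         binom (int (card X) - int (card C) - int i - 1) (int (card X) - int (rk X) - 1))"
proof -
  interpret rank_matroid X rk
    by unfold_locales (fact assms(1))
  define f :: "'a set \<Rightarrow> int" where "f A = coeff_pow_xm1 (int (rk X) - int (card A)) i" for A
  obtain D where "D \<subseteq> X" "rk D + 2 = card D"
    using assms(2) unfolding Dsets_def by blast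
  then have rank_lt_card: "rk X < card X"
    by (intro rank_lt_card_if_dependent[of D]) simp_all
  have small: "card A < dk X rk 2" if "f A \<noteq> 0" for A
  proof -
    have "int i \<le> int (rk X) - int (card A)"
      using that coeff_pow_xm1_eq_0 unfolding f_def by (meson not_less)
    then show ?thesis
      using assms(3) by linarith
  qed
  have "coeff (tutte_x1 X rk) i = (\<Sum>A\<in>{A\<in>Pow X. rk A = card A}. f A)"
    unfolding coeff_tutte_x1 f_def by (rule refl)
  also have "\<dots> = (\<Sum>A\<in>Pow X. f A)
      - (\<Sum>C\<in>{C\<in>circuits X rk. card C < dk X rk 2}. \<Sum>A\<in>{A\<in>Pow X. C \<subseteq> A}. f A)"
    using small by (intro sum_indep_eq_sum_minus_sum_circuits) blast
  also have "(\<Sum>A\<in>Pow X. f A) = binom (int (card X) - int i - 1) (int (rk X) - int i)"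
    unfolding f_def using sum_Pow_coeff_pow_xm1[OF finite_ground] rank_lt_card by simp
  also have "(\<Sum>C\<in>{C\<in>circuits X rk. card C < dk X rk 2}. \<Sum>A\<in>{A\<in>Pow X. C \<subseteq> A}. f A)
      = (\<Sum>C\<in>{C\<in>circuits X rk. card C < dk X rk 2}.
           binom (int (card X) - int (card C) - int i - 1) (int (card X) - int (rk X) - 1))"
    unfolding f_def using sum_supersets_coeff_pow_xm1[OF finite_ground] rank_lt_card
    by (intro sum.cong) (auto simp: circuits_def)
  finally show ?thesis .
qed

end
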